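(* Let $k,x_T,k_{\mathrm{on}},k_{\mathrm{off}}>0$ be constants, let $f_1,\ldots,f_n$ be functions of $(x_1,\ldots,x_n)$, and consider the system $$\dot I = k_{\mathrm{off}}x_1 - k_{\mathrm{on}} I - \lambda(C,x_1,I),\qquad \dot x_1 = f_1(x_1,\ldots,x_n) - k_{\mathrm{off}}x_1 + k_{\mathrm{on}} I + \lambda(C,x_1,I),\qquad \dot x_i = f_i(x_1,\ldots,x_n)\ (i=2,\ldots,n),$$ with the conservation law $x_1+I=x_T$, where $\dot C=h(C)$ with $C\ge 0$, and either $\lambda(C,x_1,I)=kIC$ (activation) or $\lambda(C,x_1,I)=-kx_1C$ (inhibition). Eliminating the variable $I$ yields the system $\dot{\mathbf x} = \mathbf f(\mathbf x)+\hat{\mathbf e}_1 g(u,x_1)$ with $u=kC$, where $g(u,x_1)=(u+k_{\mathrm{on}})(x_T-x_1)-k_{\mathrm{off}}x_1$ in the activation case and $g(u,x_1)=k_{\mathrm{on}}(x_T-x_1)-(u+k_{\mathrm{off}})x_1$ in the inhibition case. Moreover, the interval $[0,x_T]$ is forward-invariant for $x_1$, and at any steady state $x_1\neq 0$ and $x_1\neq x_T$.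
   Context: $\mathbf f=(f_1,\ldots,f_n)^\top$ and $\hat{\mathbf e}_1$ is the first standard basis vector of $\mathbb R^n$. $I$ is interpreted as the concentration of the inactive form of species $X_1$ and $C$ as the concentration of an external species. *)

theory Defs
  imports "HOL-Analysis.Analysis"
begin

datatype regulation = Activation | Inhibition

definition lam :: "regulation \<Rightarrow> real \<Rightarrow> real \<Rightarrow> real \<Rightarrow> real \<Rightarrow> real" where
  "lam r k C x1 I = (case r of Activation \<Rightarrow> k * I * C | Inhibition \<Rightarrow> - (k * x1 * C))"

definition g :: "regulation \<Rightarrow> real \<Rightarrow> real \<Rightarrow> real \<Rightarrow> real \<Rightarrow> real \<Rightarrow> real" where
  "g r xT kon koff u x1 = (case r of
      Activation \<Rightarrow> (u + kon) * (xT - x1) - koff * x1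
    | Inhibition \<Rightarrow> kon * (xT - x1) - (u + koff) * x1)"

end

theory Submission
  imports Defs
begin

text \<open>With \<open>I = xT - x\<^sub>1\<close> the exchange terms of the \<open>x\<^sub>1\<close>-equation collapse to the input
  \<open>g(u, x\<^sub>1)\<close>, and the \<open>I\<close>-equation becomes \<open>dI/dt = -g(u, x\<^sub>1)\<close>. For \<open>u \<ge> 0\<close> the input
  is positive at \<open>x\<^sub>1 = 0\<close> and negative at \<open>x\<^sub>1 = xT\<close>. Hence \<open>I\<close> points strictly into
  \<open>[0, xT]\<close> at both endpoints, which makes that interval forward-invariant for \<open>I\<close> and
  so for \<open>x\<^sub>1\<close>; and \<open>g\<close> cannot vanish at an endpoint, which excludes both endpoints as
  steady states.\<close>

lemma inactive_rate_eq_neg_g: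
  assumes "x1 + I = xT"
  shows "koff * x1 - kon * I - lam r k C x1 I = - g r xT kon koff (k * C) x1"
  using assms by (cases r) (auto simp: lam_def g_def algebra_simps)

lemma g_at_zero_pos:
  assumes "u \<ge> 0" "xT > 0" "kon > 0"
  shows "g r xT kon koff u 0 > 0"
  using assms by (cases r) (simp_all add: g_def add_nonneg_pos)

lemma g_at_total_neg:
  assumes "u \<ge> 0" "xT > 0" "koff > 0"
  shows "g r xT kon koff u xT < 0"
  using assms by (cases r) (simp_all add: g_def add_nonneg_pos)

lemma steady_state_not_boundary:
  assumes "k \<ge> 0" "xT > 0" "kon > 0" "koff > 0" "C \<ge> 0" "x1 + I = xT"
    and "koff * x1 - kon * I - lam r k C x1 I = 0"
  shows "x1 \<noteq> 0 \<and> x1 \<noteq> xT"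
proof -
  have "g r xT kon koff (k * C) x1 = 0"
    using assms inactive_rate_eq_neg_g[of x1 I xT koff kon r k C] by simp
  moreover have "k * C \<ge> 0"
    using assms by simp
  ultimately show ?thesis
    using g_at_zero_pos[of "k * C" xT kon r koff] g_at_total_neg[of "k * C" xT koff r kon] assms
    by auto
qed

lemma upper_barrier:
  fixes \<phi> D :: "real \<Rightarrow> real"
  assumes "s \<le> t" and "\<phi> s \<le> b"
    and der: "\<And>\<tau>. \<tau> \<in> {s..t} \<Longrightarrow> (\<phi> has_real_derivative D \<tau>) (at \<tau> within {s..t})"
    and inward: "\<And>\<tau>. \<tau> \<in> {s..t} \<Longrightarrow> \<phi> \<tau> = b \<Longrightarrow> D \<tau> < 0"
  shows "\<phi> t \<le> b"
proof (rule ccontr)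
  assume "\<not> \<phi> t \<le> b"
  then have exit: "\<phi> t > b" by simp
  have cont: "continuous_on {s..t} \<phi>"
    using der by (rule DERIV_continuous_on)
  define S where "S = {s..t} \<inter> \<phi> -` {..b}"
  define t0 where "t0 = Sup S"
  have "closed S"
    unfolding S_def by (rule continuous_closed_preimage[OF cont]) auto
  moreover have "s \<in> S" "bdd_above S"
    using assms by (auto simp: S_def)
  ultimately have t0: "t0 \<in> S" and last: "\<And>\<tau>. \<tau> \<in> S \<Longrightarrow> \<tau> \<le> t0"
    unfolding t0_def by (auto intro: closed_contains_Sup cSup_upper)
  have t0_range: "s \<le> t0" "t0 < t"
    using t0 exit by (auto simp: S_def less_le)
  \<comment> \<open>the last visit \<open>t0\<close> of \<open>{..b}\<close> before \<open>t\<close> lies on the level \<open>b\<close>, where \<open>\<phi>\<close> decreases\<close>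
  obtain y where y: "t0 \<le> y" "y \<le> t" "\<phi> y = b"
    using IVT'[of \<phi> t0 b t] t0 exit t0_range continuous_on_subset[OF cont]
    by (auto simp: S_def)
  then have "y \<in> S"
    using t0_range by (auto simp: S_def)
  with y have "y = t0"
    using last by force
  with y t0_range have "D t0 < 0"
    by (intro inward) auto
  then obtain d where d: "d > 0" "\<And>h. h > 0 \<Longrightarrow> t0 + h \<in> {s..t} \<Longrightarrow> h < d \<Longrightarrow> \<phi> (t0 + h) < \<phi> t0"
    using has_real_derivative_neg_dec_right[OF der] t0_range by (metis atLeastAtMost_iff less_imp_le)
  define h where "h = min (d / 2) (t - t0)"
  have "h > 0" "h < d" "t0 + h \<in> {s..t}"
    using d t0_range by (auto simp: h_def)
  with d y \<open>y = t0\<close> have "t0 + h \<in> S"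
    by (force simp: S_def)
  with last \<open>h > 0\<close> show False
    by force
qed

lemma interval_forward_invariant:
  fixes \<phi> D :: "real \<Rightarrow> real"
  assumes "s \<le> t" and "\<phi> s \<in> {a..b}"
    and der: "\<And>\<tau>. \<tau> \<in> {s..t} \<Longrightarrow> (\<phi> has_real_derivative D \<tau>) (at \<tau> within {s..t})"
    and "\<And>\<tau>. \<tau> \<in> {s..t} \<Longrightarrow> \<phi> \<tau> = a \<Longrightarrow> D \<tau> > 0"
    and "\<And>\<tau>. \<tau> \<in> {s..t} \<Longrightarrow> \<phi> \<tau> = b \<Longrightarrow> D \<tau> < 0"
  shows "\<phi> t \<in> {a..b}"
proof -
  have "\<phi> t \<le> b"
    using assms by (intro upper_barrier[of s t \<phi> b D]) auto
  moreover have "- \<phi> t \<le> - a"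
    using assms by (intro upper_barrier[of s t "\<lambda>\<tau>. - \<phi> \<tau>" "- a" "\<lambda>\<tau>. - D \<tau>"] DERIV_minus) auto
  ultimately show ?thesis
    by simp
qed

lemma inactive_range_forward_invariant:
  fixes I u :: "real \<Rightarrow> real"
  assumes "xT > 0" "kon > 0" "koff > 0" and u_nonneg: "\<And>\<tau>. \<tau> \<ge> 0 \<Longrightarrow> u \<tau> \<ge> 0"
    and dI: "\<And>\<tau>. \<tau> \<ge> 0 \<Longrightarrow>
      (I has_real_derivative - g r xT kon koff (u \<tau>) (xT - I \<tau>)) (at \<tau> within {0..})"
    and "0 \<le> s" "s \<le> t" "I s \<in> {0..xT}"
  shows "I t \<in> {0..xT}"
proof (rule interval_forward_invariant[of s t I 0 xT "\<lambda>\<tau>. - g r xT kon koff (u \<tau>) (xT - I \<tau>)"])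
  fix \<tau> assume "\<tau> \<in> {s..t}"
  with \<open>0 \<le> s\<close> have "\<tau> \<ge> 0" by simp
  then show "(I has_real_derivative - g r xT kon koff (u \<tau>) (xT - I \<tau>)) (at \<tau> within {s..t})"
    using dI \<open>0 \<le> s\<close> by (force intro: DERIV_subset)
  show "- g r xT kon koff (u \<tau>) (xT - I \<tau>) > 0" if "I \<tau> = 0"
    using g_at_total_neg u_nonneg[OF \<open>\<tau> \<ge> 0\<close>] assms that by simp
  show "- g r xT kon koff (u \<tau>) (xT - I \<tau>) < 0" if "I \<tau> = xT"
    using g_at_zero_pos u_nonneg[OF \<open>\<tau> \<ge> 0\<close>] assms that by simp
qed (use assms in auto)

theorem lemma6:
  fixes r :: regulation
    and k xT kon koff :: real
    and n :: nat
    and f :: "nat \<Rightarrow> (nat \<Rightarrow> real) \<Rightarrow> real"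
    and h :: "real \<Rightarrow> real"
    and I C :: "real \<Rightarrow> real"
    and x :: "real \<Rightarrow> nat \<Rightarrow> real"
  assumes pos: "k > 0" "xT > 0" "kon > 0" "koff > 0"
    and n1: "n \<ge> 1"
    and dI: "\<forall>t\<ge>0. (I has_real_derivative
               (koff * x t 1 - kon * I t - lam r k (C t) (x t 1) (I t))) (at t within {0..})"
    and dx1: "\<forall>t\<ge>0. ((\<lambda>s. x s 1) has_real_derivative
               (f 1 (x t) - koff * x t 1 + kon * I t + lam r k (C t) (x t 1) (I t))) (at t within {0..})"
    and dxi: "\<forall>t\<ge>0. \<forall>i\<in>{2..n}. ((\<lambda>s. x s i) has_real_derivative f i (x t)) (at t within {0..})"
    and dC: "\<forall>t\<ge>0. (C has_real_derivative h (C t)) (at t within {0..})"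
    and Cnn: "\<forall>t\<ge>0. C t \<ge> 0"
    and cons: "\<forall>t\<ge>0. x t 1 + I t = xT"
  shows "(\<forall>t\<ge>0. \<forall>i\<in>{1..n}. ((\<lambda>s. x s i) has_real_derivative
              (f i (x t) + (if i = 1 then g r xT kon koff (k * C t) (x t 1) else 0))) (at t within {0..}))
       \<and> (\<forall>s\<ge>0. x s 1 \<in> {0..xT} \<longrightarrow> (\<forall>t\<ge>s. x t 1 \<in> {0..xT}))
       \<and> (\<forall>Is Cs xs. Cs \<ge> 0 \<and> h Cs = 0 \<and> xs 1 + Is = xT
            \<and> koff * xs 1 - kon * Is - lam r k Cs (xs 1) Is = 0
            \<and> f 1 xs - koff * xs 1 + kon * Is + lam r k Cs (xs 1) Is = 0
            \<and> (\<forall>i\<in>{2..n}. f i xs = 0)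
            \<longrightarrow> xs 1 \<noteq> 0 \<and> xs 1 \<noteq> xT)"
proof -
  have x1_eq: "x t 1 = xT - I t" if "t \<ge> 0" for t
    using cons that by (simp add: algebra_simps)
  have I_rate: "koff * x t 1 - kon * I t - lam r k (C t) (x t 1) (I t)
      = - g r xT kon koff (k * C t) (x t 1)" if "t \<ge> 0" for t
    using inactive_rate_eq_neg_g[of "x t 1" "I t" xT] cons that by simp
  have reduced: "((\<lambda>s. x s i) has_real_derivative
      (f i (x t) + (if i = 1 then g r xT kon koff (k * C t) (x t 1) else 0))) (at t within {0..})"
    if "t \<ge> 0" "i \<in> {1..n}" for t i
  proof (cases "i = 1")
    case True
    show ?thesis
      unfolding True
      by (rule DERIV_cong[OF dx1[rule_format, OF \<open>t \<ge> 0\<close>]]) (use I_rate[OF \<open>t \<ge> 0\<close>] in \<open>simp; linarith\<close>)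
  qed (use that dxi in auto)
  have dI_reduced: "(I has_real_derivative - g r xT kon koff (k * C t) (xT - I t)) (at t within {0..})"
    if "t \<ge> 0" for t
    by (rule DERIV_cong[OF dI[rule_format, OF that]]) (use I_rate[OF that] x1_eq[OF that] in simp)
  have u_nonneg: "k * C t \<ge> 0" if "t \<ge> 0" for t
    using pos Cnn that by simp
  have invariant: "x t 1 \<in> {0..xT}" if "0 \<le> s" "s \<le> t" "x s 1 \<in> {0..xT}" for s t
    using inactive_range_forward_invariant[OF pos(2-4) u_nonneg dI_reduced, of s t]
      that x1_eq[of s] x1_eq[of t] by auto
  have steady: "xs 1 \<noteq> 0 \<and> xs 1 \<noteq> xT"
    if "Cs \<ge> 0" "xs 1 + Is = xT" "koff * xs 1 - kon * Is - lam r k Cs (xs 1) Is = 0" for Is Cs xs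
    using steady_state_not_boundary[OF less_imp_le[OF pos(1)] pos(2-4) that] .
  show ?thesis
    by (intro conjI) (use reduced in blast, use invariant in blast, use steady in blast)
qed

end
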